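(* Let $y_1\neq 0$ be a real number and let $Y,Y'\in\mathfrak o(V,K)$, written in block form $$Y=\begin{pmatrix}a&-\widetilde e^{\,*}&0\\ \widetilde b&\widetilde Y&\widetilde e\\0&-\widetilde b^{\,*}&-a\end{pmatrix},\qquad Y'=\begin{pmatrix}a'&-(\widetilde e')^{*}&0\\ \widetilde b'&\widetilde Y'&\widetilde e'\\0&-(\widetilde b')^{*}&-a'\end{pmatrix}$$ with $a,a'\in\mathbb R$, $\widetilde b,\widetilde e,\widetilde b',\widetilde e'\in\mathbb R^n$ and $\widetilde Y,\widetilde Y'\in\mathfrak o(\widetilde V,\widetilde K)$. Then the special tuples $(Y,y_1e_1)$ and $(Y',y_1e_1)$ are equivalent if and only if there exists $\widetilde P\in O(\widetilde V,\widetilde K)$ with $\widetilde Y'=\widetilde P\,\widetilde Y\,\widetilde P^{-1}$.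
   Context: Let $n\ge 0$ be an integer and let $\widetilde K$ be a real symmetric $n\times n$ matrix with $\widetilde K^2=I_n$; let $\widetilde V=\mathbb R^n$, $\widetilde x^{\,*}=\widetilde x^{\,T}\widetilde K$, $O(\widetilde V,\widetilde K)=\{\widetilde P:\widetilde P^T\widetilde K\widetilde P=\widetilde K\}$, $\mathfrak o(\widetilde V,\widetilde K)=\{\widetilde X:\widetilde X^T\widetilde K+\widetilde K\widetilde X=0\}$. Let $V=\mathbb R^{n+2}$ with standard basis $e_1,\dots,e_{n+2}$ (the middle $n$ coordinates identified with $\widetilde V$), and let $K=\begin{pmatrix}0&0&1\\0&\widetilde K&0\\1&0&0\end{pmatrix}$ (block sizes $1,n,1$). For $x,w\in V$ write $x^*=x^TK$ and $L_{u,w}=u\,w^*-w\,u^*$. Let $O(V,K)=\{P:P^TKP=K\}$, $\mathfrak o(V,K)=\{X:X^TK+KX=0\}$ (every element of which has the block form displayed in the claim), $O(V,K)_{e_{n+2}}=\{P\in O(V,K):Pe_{n+2}=e_{n+2}\}$. A special tuple is a pair $(Y,y)$ with $Y\in\mathfrak o(V,K)$, $y\in V$. Two special tuples $(Y,y)$ and $(Y',y')$ are equivalent if there exist $P\in O(V,K)_{e_{n+2}}$, vectors $v,p\in V$ with $p^*(e_{n+2})=0$, and $v_0\in\mathbb R$ such that $Y'+L_{v,e_{n+2}}=P(Y+L_{p,y})P^{-1}$ and $y'=Py+v_0e_{n+2}$. *)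

theory Defs
  imports "Jordan_Normal_Form.Matrix"
begin

text \<open>Matrices are Jordan_Normal_Form matrices over the reals. Indices are 0-based:
  the standard basis vector e_1 of V is unit_vec (n+2) 0 and e_{n+2} is unit_vec (n+2) (n+1).\<close>

definition bigK :: "real mat \<Rightarrow> real mat" where
  "bigK Kt = (let n = dim_row Kt in
     mat (n+2) (n+2) (\<lambda>(i,j).
       if (i = 0 \<and> j = n+1) \<or> (i = n+1 \<and> j = 0) then 1
       else if 0 < i \<and> i \<le> n \<and> 0 < j \<and> j \<le> n then Kt $$ (i-1, j-1)
       else 0))"

definition cvec :: "real vec \<Rightarrow> real mat" where
  "cvec x = mat_of_cols (dim_vec x) [x]"

definition xstar :: "real mat \<Rightarrow> real vec \<Rightarrow> real mat" where
  "xstar K x = transpose_mat (cvec x) * K"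

text \<open>Components of the row vector x^* = x^T K, as a vector.\<close>
definition vstar :: "real mat \<Rightarrow> real vec \<Rightarrow> real vec" where
  "vstar K x = transpose_mat K *\<^sub>v x"

definition Lmat :: "real mat \<Rightarrow> real vec \<Rightarrow> real vec \<Rightarrow> real mat" where
  "Lmat K u w = cvec u * xstar K w - cvec w * xstar K u"

definition orth_group :: "real mat \<Rightarrow> real mat set" where
  "orth_group K = {P \<in> carrier_mat (dim_row K) (dim_row K). transpose_mat P * K * P = K}"

definition orth_alg :: "real mat \<Rightarrow> real mat set" where
  "orth_alg K = {X \<in> carrier_mat (dim_row K) (dim_row K). transpose_mat X * K + K * X = 0\<^sub>m (dim_row K) (dim_row K)}"

definition blockY :: "real mat \<Rightarrow> real \<Rightarrow> real vec \<Rightarrow> real vec \<Rightarrow> real mat \<Rightarrow> real mat" where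
  "blockY Kt a b e Yt = (let n = dim_row Kt in
     mat (n+2) (n+2) (\<lambda>(i,j).
       if i = 0 then (if j = 0 then a else if j \<le> n then - (vstar Kt e $ (j-1)) else 0)
       else if i \<le> n then (if j = 0 then b $ (i-1) else if j \<le> n then Yt $$ (i-1, j-1) else e $ (i-1))
       else (if j = 0 then 0 else if j \<le> n then - (vstar Kt b $ (j-1)) else - a)))"

definition equiv_tuple :: "real mat \<Rightarrow> real mat \<Rightarrow> real vec \<Rightarrow> real mat \<Rightarrow> real vec \<Rightarrow> bool" where
  "equiv_tuple Kt Y y Y' y' = (let n = dim_row Kt; K = bigK Kt; en = unit_vec (n+2) (n+1) in
     \<exists>P v p v0 Q. P \<in> orth_group K \<and> P *\<^sub>v en = en \<and>
        v \<in> carrier_vec (n+2) \<and> p \<in> carrier_vec (n+2) \<and>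
        (xstar K p * cvec en) $$ (0,0) = 0 \<and>
        Q \<in> carrier_mat (n+2) (n+2) \<and> P * Q = 1\<^sub>m (n+2) \<and> Q * P = 1\<^sub>m (n+2) \<and>
        Y' + Lmat K v en = P * (Y + Lmat K p y) * Q \<and>
        y' = P *\<^sub>v y + v0 \<cdot>\<^sub>v en)"

end

theory Submission
  imports Defs "Jordan_Normal_Form.Determinant"
begin

(* An element P of O(V,K) that fixes e_{n+2} and moves y_1 e_1 only along e_{n+2} is forced by
   K-orthogonality to be diag(1, P~, 1) with P~ in O(V~,K~). Adding L_{p, y_1 e_1} (where
   p^*(e_{n+2}) = 0) or L_{v, e_{n+2}} to a block matrix Y changes only the border entries a, b~, e~
   and never the middle block, so an equivalence forces Y~' P~ = P~ Y~. Conversely, conjugation by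
   diag(1, P~, 1) replaces the middle block Y~ by Y~' and transforms b~, e~ by P~; suitable p and v
   then match the border entries. *)

lemma sum_lessThan_add2_split:
  "(\<Sum>k<n+2. f k) = f 0 + (\<Sum>k<n. f (Suc k)) + (f (Suc n) :: 'a :: comm_monoid_add)"
proof -
  have "(\<Sum>k<n+2. f k) = (\<Sum>k<Suc n. f k) + f (Suc n)" by simp
  also have "(\<Sum>k<Suc n. f k) = f 0 + (\<Sum>k<n. f (Suc k))" by (rule sum.lessThan_Suc_shift)
  finally show ?thesis .
qed

lemma less_add2_cases:
  assumes "i < n+2"
  obtains "i = 0" | "i = Suc n" | k where "k < n" "i = Suc k"
  using assms by (cases i) (auto simp: less_Suc_eq)

lemma index_mult_mat_sum:
  "A \<in> carrier_mat m k \<Longrightarrow> B \<in> carrier_mat k l \<Longrightarrow> i < m \<Longrightarrow> j < l \<Longrightarrow>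
   (A * B) $$ (i,j) = (\<Sum>q<k. A $$ (i,q) * B $$ (q,j))"
  by (auto simp: scalar_prod_def lessThan_atLeast0 intro!: sum.cong)

lemma index_mult_mat_vec_sum:
  "A \<in> carrier_mat m k \<Longrightarrow> v \<in> carrier_vec k \<Longrightarrow> i < m \<Longrightarrow>
   (A *\<^sub>v v) $ i = (\<Sum>q<k. A $$ (i,q) * v $ q)"
  by (auto simp: scalar_prod_def lessThan_atLeast0 intro!: sum.cong)

lemma index_transpose_mult_mult_sum:
  fixes A B C :: "'a :: comm_semiring_1 mat"
  assumes "A \<in> carrier_mat m m" "B \<in> carrier_mat m m" "C \<in> carrier_mat m m" "i < m" "j < m"
  shows "(transpose_mat A * B * C) $$ (i,j) = (\<Sum>k<m. \<Sum>l<m. A $$ (k,i) * B $$ (k,l) * C $$ (l,j))"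
proof -
  have "(transpose_mat A * B * C) $$ (i,j) = (\<Sum>l<m. (transpose_mat A * B) $$ (i,l) * C $$ (l,j))"
    using assms by (intro index_mult_mat_sum[of _ m m _ m]) auto
  also have "\<dots> = (\<Sum>l<m. (\<Sum>k<m. A $$ (k,i) * B $$ (k,l)) * C $$ (l,j))"
    using assms by (intro sum.cong refl, subst index_mult_mat_sum[of _ m m _ m]) auto
  also have "\<dots> = (\<Sum>l<m. \<Sum>k<m. A $$ (k,i) * B $$ (k,l) * C $$ (l,j))"
    by (simp add: sum_distrib_right)
  finally show ?thesis by (subst sum.swap)
qed

definition diag_embed :: "nat \<Rightarrow> 'a :: zero_neq_one mat \<Rightarrow> 'a mat" where
  "diag_embed n A = mat (n+2) (n+2) (\<lambda>(i,j).
     if i = 0 \<and> j = 0 \<or> i = n+1 \<and> j = n+1 then 1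
     else if 0 < i \<and> i \<le> n \<and> 0 < j \<and> j \<le> n then A $$ (i-1, j-1) else 0)"

definition mid_block :: "nat \<Rightarrow> 'a mat \<Rightarrow> 'a mat" where
  "mid_block n M = mat n n (\<lambda>(i,j). M $$ (Suc i, Suc j))"

definition stack_vec :: "'a \<Rightarrow> 'a vec \<Rightarrow> 'a \<Rightarrow> 'a vec" where
  "stack_vec c x d = vec (dim_vec x + 2) (\<lambda>i. if i = 0 then c else if i \<le> dim_vec x then x $ (i-1) else d)"

lemma diag_embed_carrier: "diag_embed n A \<in> carrier_mat (n+2) (n+2)"
  by (simp add: diag_embed_def)

lemma dim_diag_embed [simp]: "dim_row (diag_embed n A) = n+2" "dim_col (diag_embed n A) = n+2"
  by (simp_all add: diag_embed_def)

lemma index_diag_embed: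
  "diag_embed n A $$ (0,0) = 1" "diag_embed n A $$ (Suc n,Suc n) = 1"
  "diag_embed n A $$ (0,Suc n) = 0" "diag_embed n A $$ (Suc n,0) = 0"
  "k < n \<Longrightarrow> diag_embed n A $$ (0,Suc k) = 0" "k < n \<Longrightarrow> diag_embed n A $$ (Suc k,0) = 0"
  "k < n \<Longrightarrow> diag_embed n A $$ (Suc n,Suc k) = 0" "k < n \<Longrightarrow> diag_embed n A $$ (Suc k,Suc n) = 0"
  "k < n \<Longrightarrow> l < n \<Longrightarrow> diag_embed n A $$ (Suc k,Suc l) = A $$ (k,l)"
  by (auto simp: diag_embed_def)

lemma diag_embed_mult:
  fixes A B :: "'a :: semiring_1 mat"
  assumes A: "A \<in> carrier_mat n n" and B: "B \<in> carrier_mat n n"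
  shows "diag_embed n A * diag_embed n B = diag_embed n (A * B)"
proof (rule eq_matI)
  fix i j assume "i < dim_row (diag_embed n (A * B))" "j < dim_col (diag_embed n (A * B))"
  then have i: "i < n+2" and j: "j < n+2" by auto
  show "(diag_embed n A * diag_embed n B) $$ (i,j) = diag_embed n (A * B) $$ (i,j)"
    unfolding index_mult_mat_sum[OF diag_embed_carrier diag_embed_carrier i j] sum_lessThan_add2_split
    by (rule less_add2_cases[OF i]; rule less_add2_cases[OF j])
      (use A B in \<open>auto simp: index_diag_embed index_mult_mat_sum[OF A B]
         simp del: index_mult_mat(1) cong: sum.cong_simp\<close>)
qed auto

lemma diag_embed_one: "diag_embed n (1\<^sub>m n) = 1\<^sub>m (n+2)"
  by (rule eq_matI) (auto simp: diag_embed_def)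

lemma diag_embed_mult_unit_vec:
  fixes A :: "'a :: semiring_1 mat"
  shows "diag_embed n A *\<^sub>v unit_vec (n+2) 0 = unit_vec (n+2) 0"
    "diag_embed n A *\<^sub>v unit_vec (n+2) (n+1) = unit_vec (n+2) (n+1)"
  by (rule eq_vecI; auto simp: diag_embed_def)+

lemma mid_block_carrier: "mid_block n M \<in> carrier_mat n n"
  by (simp add: mid_block_def)

lemma mid_block_diag_embed_mult:
  fixes A M :: "'a :: semiring_1 mat"
  assumes A: "A \<in> carrier_mat n n" and M: "M \<in> carrier_mat (n+2) (n+2)"
  shows "mid_block n (diag_embed n A * M) = A * mid_block n M"
proof (rule eq_matI)
  fix i j assume "i < dim_row (A * mid_block n M)" "j < dim_col (A * mid_block n M)"
  then have i: "i < n" and j: "j < n" using A by (auto simp: mid_block_def)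
  have "mid_block n (diag_embed n A * M) $$ (i,j) = (\<Sum>q<n+2. diag_embed n A $$ (Suc i,q) * M $$ (q,Suc j))"
    using i j by (simp add: mid_block_def index_mult_mat_sum[OF diag_embed_carrier M])
  also have "\<dots> = (A * mid_block n M) $$ (i,j)"
    unfolding sum_lessThan_add2_split index_mult_mat_sum[OF A mid_block_carrier i j]
    using i j by (simp add: mid_block_def index_diag_embed cong: sum.cong_simp)
  finally show "mid_block n (diag_embed n A * M) $$ (i,j) = (A * mid_block n M) $$ (i,j)" .
qed (use A in \<open>auto simp: mid_block_def\<close>)

lemma mid_block_mult_diag_embed:
  fixes A M :: "'a :: semiring_1 mat"
  assumes A: "A \<in> carrier_mat n n" and M: "M \<in> carrier_mat (n+2) (n+2)"
  shows "mid_block n (M * diag_embed n A) = mid_block n M * A"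
proof (rule eq_matI)
  fix i j assume "i < dim_row (mid_block n M * A)" "j < dim_col (mid_block n M * A)"
  then have i: "i < n" and j: "j < n" using A by (auto simp: mid_block_def)
  have "mid_block n (M * diag_embed n A) $$ (i,j) = (\<Sum>q<n+2. M $$ (Suc i,q) * diag_embed n A $$ (q,Suc j))"
    using i j by (simp add: mid_block_def index_mult_mat_sum[OF M diag_embed_carrier])
  also have "\<dots> = (mid_block n M * A) $$ (i,j)"
    unfolding sum_lessThan_add2_split index_mult_mat_sum[OF mid_block_carrier A i j]
    using i j by (simp add: mid_block_def index_diag_embed cong: sum.cong_simp)
  finally show "mid_block n (M * diag_embed n A) $$ (i,j) = (mid_block n M * A) $$ (i,j)" .
qed (use A in \<open>auto simp: mid_block_def\<close>)

lemma diag_embed_mid_block: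
  assumes P: "P \<in> carrier_mat (n+2) (n+2)"
    and corners: "P $$ (0,0) = 1" "P $$ (Suc n,Suc n) = 1" "P $$ (0,Suc n) = 0" "P $$ (Suc n,0) = 0"
    and border: "\<And>k. k < n \<Longrightarrow> P $$ (0,Suc k) = 0 \<and> P $$ (Suc k,0) = 0 \<and>
                                P $$ (Suc n,Suc k) = 0 \<and> P $$ (Suc k,Suc n) = 0"
  shows "diag_embed n (mid_block n P) = P"
proof (rule eq_matI)
  fix i j assume "i < dim_row P" "j < dim_col P"
  then have i: "i < n+2" and j: "j < n+2" using P by auto
  show "diag_embed n (mid_block n P) $$ (i,j) = P $$ (i,j)"
    by (rule less_add2_cases[OF i]; rule less_add2_cases[OF j])
      (auto simp: index_diag_embed corners border mid_block_def)
qed (use P in auto)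

lemma stack_vec_carrier: "x \<in> carrier_vec n \<Longrightarrow> stack_vec c x d \<in> carrier_vec (n+2)"
  unfolding stack_vec_def by (metis carrier_vecD vec_carrier)

lemma dim_stack_vec [simp]: "dim_vec (stack_vec c x d) = dim_vec x + 2"
  by (simp add: stack_vec_def)

lemma index_stack_vec:
  assumes "x \<in> carrier_vec n"
  shows "stack_vec c x d $ 0 = c" "stack_vec c x d $ Suc n = d" "k < n \<Longrightarrow> stack_vec c x d $ Suc k = x $ k"
proof -
  have "dim_vec x = n" using assms by simp
  then show "stack_vec c x d $ 0 = c" "stack_vec c x d $ Suc n = d" "k < n \<Longrightarrow> stack_vec c x d $ Suc k = x $ k"
    by (simp_all add: stack_vec_def)
qed

lemma stack_vec_components:
  assumes "v \<in> carrier_vec (n+2)"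
  shows "stack_vec (v $ 0) (vec n (\<lambda>k. v $ Suc k)) (v $ Suc n) = v"
proof (rule eq_vecI)
  fix i assume "i < dim_vec v"
  then have "i < n+2" using assms by simp
  then show "stack_vec (v $ 0) (vec n (\<lambda>k. v $ Suc k)) (v $ Suc n) $ i = v $ i"
    by (rule less_add2_cases) (simp_all add: index_stack_vec[of "vec n (\<lambda>k. v $ Suc k)" n])
qed (use assms in \<open>simp add: stack_vec_def\<close>)

lemma bigK_carrier: "Kt \<in> carrier_mat n n \<Longrightarrow> bigK Kt \<in> carrier_mat (n+2) (n+2)"
  by (simp add: bigK_def Let_def)

lemma dim_bigK [simp]: "dim_row (bigK Kt) = dim_row Kt + 2" "dim_col (bigK Kt) = dim_row Kt + 2"
  by (simp_all add: bigK_def Let_def)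

lemma index_bigK:
  assumes "Kt \<in> carrier_mat n n"
  shows "bigK Kt $$ (0,0) = 0" "bigK Kt $$ (Suc n,Suc n) = 0"
    "bigK Kt $$ (0,Suc n) = 1" "bigK Kt $$ (Suc n,0) = 1"
    "k < n \<Longrightarrow> bigK Kt $$ (0,Suc k) = 0" "k < n \<Longrightarrow> bigK Kt $$ (Suc k,0) = 0"
    "k < n \<Longrightarrow> bigK Kt $$ (Suc n,Suc k) = 0" "k < n \<Longrightarrow> bigK Kt $$ (Suc k,Suc n) = 0"
    "k < n \<Longrightarrow> l < n \<Longrightarrow> bigK Kt $$ (Suc k,Suc l) = Kt $$ (k,l)"
  using assms by (auto simp: bigK_def Let_def)

lemma mid_block_bigK: "Kt \<in> carrier_mat n n \<Longrightarrow> mid_block n (bigK Kt) = Kt"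
  by (rule eq_matI) (auto simp: mid_block_def index_bigK)

lemma index_transpose_mult_bigK_mult:
  assumes Kt: "Kt \<in> carrier_mat n n" and P: "P \<in> carrier_mat (n+2) (n+2)" and "i < n+2" "j < n+2"
  shows "(transpose_mat P * bigK Kt * P) $$ (i,j) = P $$ (0,i) * P $$ (Suc n,j) + P $$ (Suc n,i) * P $$ (0,j)
     + (\<Sum>k<n. \<Sum>l<n. P $$ (Suc k,i) * Kt $$ (k,l) * P $$ (Suc l,j))"
proof -
  have "(transpose_mat P * bigK Kt * P) $$ (i,j) =
      (\<Sum>k<n+2. \<Sum>l<n+2. P $$ (k,i) * bigK Kt $$ (k,l) * P $$ (l,j))"
    by (rule index_transpose_mult_mult_sum) (use assms bigK_carrier in auto)
  then show ?thesis
    unfolding sum_lessThan_add2_split by (simp add: index_bigK[OF Kt] sum.distrib cong: sum.cong_simp)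
qed

lemma transpose_diag_embed_mult_bigK:
  assumes Kt: "Kt \<in> carrier_mat n n" and A: "A \<in> carrier_mat n n"
  shows "transpose_mat (diag_embed n A) * bigK Kt * diag_embed n A = bigK (transpose_mat A * Kt * A)"
proof (rule eq_matI)
  have AKA: "transpose_mat A * Kt * A \<in> carrier_mat n n" using A Kt by simp
  fix i j assume "i < dim_row (bigK (transpose_mat A * Kt * A))" "j < dim_col (bigK (transpose_mat A * Kt * A))"
  then have i: "i < n+2" and j: "j < n+2" using bigK_carrier[OF AKA] by auto
  show "(transpose_mat (diag_embed n A) * bigK Kt * diag_embed n A) $$ (i,j) = bigK (transpose_mat A * Kt * A) $$ (i,j)"
    unfolding index_transpose_mult_bigK_mult[OF Kt diag_embed_carrier i j]
    by (rule less_add2_cases[OF i]; rule less_add2_cases[OF j])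
      (auto simp: index_diag_embed index_bigK[OF Kt] index_bigK[OF AKA]
         index_transpose_mult_mult_sum[OF A Kt A] cong: sum.cong_simp)
qed (use Kt A in auto)

lemma diag_embed_in_orth_group_iff:
  assumes Kt: "Kt \<in> carrier_mat n n" and A: "A \<in> carrier_mat n n"
  shows "diag_embed n A \<in> orth_group (bigK Kt) \<longleftrightarrow> A \<in> orth_group Kt"
proof -
  have "diag_embed n A \<in> orth_group (bigK Kt) \<longleftrightarrow> bigK (transpose_mat A * Kt * A) = bigK Kt"
    using Kt diag_embed_carrier[of n A] by (simp add: orth_group_def transpose_diag_embed_mult_bigK[OF Kt A])
  also have "\<dots> \<longleftrightarrow> transpose_mat A * Kt * A = Kt"
    using mid_block_bigK[of "transpose_mat A * Kt * A" n] mid_block_bigK[OF Kt] A Kt by auto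
  finally show ?thesis using A Kt by (simp add: orth_group_def)
qed

lemma vstar_carrier: "K \<in> carrier_mat m m \<Longrightarrow> x \<in> carrier_vec m \<Longrightarrow> vstar K x \<in> carrier_vec m"
  by (simp add: vstar_def)

lemma index_vstar:
  "K \<in> carrier_mat m m \<Longrightarrow> x \<in> carrier_vec m \<Longrightarrow> l < m \<Longrightarrow> vstar K x $ l = (\<Sum>q<m. K $$ (q,l) * x $ q)"
  unfolding vstar_def by (subst index_mult_mat_vec_sum[of _ m m]) auto

lemma vstar_add_smult:
  assumes "K \<in> carrier_mat m m" "u \<in> carrier_vec m" "w \<in> carrier_vec m"
  shows "vstar K (u + c \<cdot>\<^sub>v w) = vstar K u + c \<cdot>\<^sub>v vstar K w"
  using assms unfolding vstar_def by (simp add: mult_add_distrib_mat_vec[of _ m m] mult_mat_vec[of _ m m])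

lemma index_vstar_smult_unit_vec:
  "K \<in> carrier_mat m m \<Longrightarrow> k < m \<Longrightarrow> j < m \<Longrightarrow> vstar K (c \<cdot>\<^sub>v unit_vec m k) $ j = c * K $$ (k,j)"
  unfolding vstar_def by (simp add: mult_mat_vec[of _ m m])

lemma vstar_bigK_stack_vec:
  assumes Kt: "Kt \<in> carrier_mat n n" and x: "x \<in> carrier_vec n"
  shows "vstar (bigK Kt) (stack_vec c x d) = stack_vec d (vstar Kt x) c"
proof (rule eq_vecI)
  have xs: "vstar Kt x \<in> carrier_vec n" by (rule vstar_carrier[OF Kt x])
  fix j assume "j < dim_vec (stack_vec d (vstar Kt x) c)"
  then have j: "j < n+2" using xs by simp
  have "vstar (bigK Kt) (stack_vec c x d) $ j = (\<Sum>q<n+2. bigK Kt $$ (q,j) * stack_vec c x d $ q)"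
    by (rule index_vstar[OF bigK_carrier[OF Kt] stack_vec_carrier[OF x] j])
  then have vstar_j: "vstar (bigK Kt) (stack_vec c x d) $ j = bigK Kt $$ (0,j) * c
      + (\<Sum>k<n. bigK Kt $$ (Suc k,j) * x $ k) + bigK Kt $$ (Suc n,j) * d"
    unfolding sum_lessThan_add2_split by (simp add: index_stack_vec[OF x] cong: sum.cong_simp)
  show "vstar (bigK Kt) (stack_vec c x d) $ j = stack_vec d (vstar Kt x) c $ j"
    by (rule less_add2_cases[OF j])
      (use vstar_j in \<open>auto simp: index_bigK[OF Kt] index_stack_vec[OF x] index_stack_vec[OF xs] index_vstar[OF Kt x]
         cong: sum.cong_simp\<close>)
qed (use stack_vec_carrier vstar_carrier Kt x bigK_carrier in \<open>auto simp: vstar_def\<close>)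

lemma cvec_carrier: "u \<in> carrier_vec m \<Longrightarrow> cvec u \<in> carrier_mat m 1"
  unfolding cvec_def using mat_of_cols_carrier(1)[of "dim_vec u" "[u]"] by simp

lemma xstar_carrier: "K \<in> carrier_mat m m \<Longrightarrow> w \<in> carrier_vec m \<Longrightarrow> xstar K w \<in> carrier_mat 1 m"
  unfolding xstar_def by (rule mult_carrier_mat[of _ 1 m], unfold transpose_carrier_mat, rule cvec_carrier)

lemma xstar_mult_cvec_unit_vec:
  assumes K: "K \<in> carrier_mat m m" and p: "p \<in> carrier_vec m" and k: "k < m"
  shows "(xstar K p * cvec (unit_vec m k)) $$ (0,0) = vstar K p $ k"
proof -
  have "(xstar K p * cvec (unit_vec m k)) $$ (0,0) = (\<Sum>i<m. xstar K p $$ (0,i) * unit_vec m k $ i)"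
    by (subst index_mult_mat_sum[OF xstar_carrier[OF K p] cvec_carrier])
      (auto simp: cvec_def mat_of_cols_def)
  also have "\<dots> = (\<Sum>i<m. if i = k then xstar K p $$ (0,i) else 0)"
    using k by (intro sum.cong) auto
  also have "\<dots> = xstar K p $$ (0,k)"
    using k by (simp add: sum.delta')
  also have "\<dots> = vstar K p $ k"
    using K p k unfolding xstar_def
    by (auto simp: index_vstar[OF K p k] cvec_def mat_of_cols_def scalar_prod_def lessThan_atLeast0
        mult.commute intro!: sum.cong)
  finally show ?thesis .
qed

lemma xstar_bigK_mult_cvec_unit_vec_last:
  assumes Kt: "Kt \<in> carrier_mat n n" and p: "p \<in> carrier_vec (n+2)"
  shows "(xstar (bigK Kt) p * cvec (unit_vec (n+2) (n+1))) $$ (0,0) = p $ 0"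
proof -
  let ?x = "vec n (\<lambda>k. p $ Suc k)"
  have x: "?x \<in> carrier_vec n" by simp
  have "vstar (bigK Kt) p = stack_vec (p $ Suc n) (vstar Kt ?x) (p $ 0)"
    using vstar_bigK_stack_vec[OF Kt x, where c = "p $ 0" and d = "p $ Suc n"]
    unfolding stack_vec_components[OF p] .
  then show ?thesis
    using xstar_mult_cvec_unit_vec[OF bigK_carrier[OF Kt] p, of "n+1"]
    by (simp add: index_stack_vec[OF vstar_carrier[OF Kt x]])
qed

lemma dim_Lmat [simp]: "dim_row (Lmat K u w) = dim_vec w" "dim_col (Lmat K u w) = dim_col K"
  by (simp_all add: Lmat_def cvec_def xstar_def)

lemma index_Lmat:
  assumes "K \<in> carrier_mat m m" "u \<in> carrier_vec m" "w \<in> carrier_vec m" "i < m" "j < m"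
  shows "Lmat K u w $$ (i,j) = u $ i * vstar K w $ j - w $ i * vstar K u $ j"
  using assms
  by (auto simp: Lmat_def xstar_def cvec_def vstar_def scalar_prod_def lessThan_atLeast0
      mat_of_cols_def mult.commute intro!: sum.cong)

lemma blockY_carrier: "Kt \<in> carrier_mat n n \<Longrightarrow> blockY Kt a b e Yt \<in> carrier_mat (n+2) (n+2)"
  by (simp add: blockY_def Let_def)

lemma dim_blockY [simp]:
  "dim_row (blockY Kt a b e Yt) = dim_row Kt + 2" "dim_col (blockY Kt a b e Yt) = dim_row Kt + 2"
  by (simp_all add: blockY_def Let_def)

lemma index_blockY:
  assumes "Kt \<in> carrier_mat n n"
  shows "blockY Kt a b e Yt $$ (0,0) = a" "blockY Kt a b e Yt $$ (Suc n,Suc n) = -a"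
    "blockY Kt a b e Yt $$ (0,Suc n) = 0" "blockY Kt a b e Yt $$ (Suc n,0) = 0"
    "k < n \<Longrightarrow> blockY Kt a b e Yt $$ (0,Suc k) = - vstar Kt e $ k"
    "k < n \<Longrightarrow> blockY Kt a b e Yt $$ (Suc k,0) = b $ k"
    "k < n \<Longrightarrow> blockY Kt a b e Yt $$ (Suc n,Suc k) = - vstar Kt b $ k"
    "k < n \<Longrightarrow> blockY Kt a b e Yt $$ (Suc k,Suc n) = e $ k"
    "k < n \<Longrightarrow> l < n \<Longrightarrow> blockY Kt a b e Yt $$ (Suc k,Suc l) = Yt $$ (k,l)"
  using assms by (auto simp: blockY_def Let_def)

lemma mid_block_blockY:
  "Kt \<in> carrier_mat n n \<Longrightarrow> Yt \<in> carrier_mat n n \<Longrightarrow> mid_block n (blockY Kt a b e Yt) = Yt"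
  by (rule eq_matI) (auto simp: mid_block_def index_blockY)

lemma blockY_add_Lmat_e1:
  assumes Kt: "Kt \<in> carrier_mat n n" and x: "x \<in> carrier_vec n" and e: "e \<in> carrier_vec n"
  shows "blockY Kt a b e Yt + Lmat (bigK Kt) (stack_vec 0 x d) (y1 \<cdot>\<^sub>v unit_vec (n+2) 0)
    = blockY Kt (a - y1 * d) b (e + y1 \<cdot>\<^sub>v x) Yt"
proof (rule eq_matI)
  let ?p = "stack_vec 0 x d" and ?y = "y1 \<cdot>\<^sub>v unit_vec (n+2) 0"
  have p: "?p \<in> carrier_vec (n+2)" by (rule stack_vec_carrier[OF x])
  have xs: "vstar Kt x \<in> carrier_vec n" by (rule vstar_carrier[OF Kt x])
  fix i j assume "i < dim_row (blockY Kt (a - y1 * d) b (e + y1 \<cdot>\<^sub>v x) Yt)"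
    "j < dim_col (blockY Kt (a - y1 * d) b (e + y1 \<cdot>\<^sub>v x) Yt)"
  then have i: "i < n+2" and j: "j < n+2" using Kt by auto
  have entry: "(blockY Kt a b e Yt + Lmat (bigK Kt) ?p ?y) $$ (i,j)
      = blockY Kt a b e Yt $$ (i,j) + (?p $ i * (y1 * bigK Kt $$ (0,j)) - ?y $ i * vstar (bigK Kt) ?p $ j)"
    using Kt i j index_Lmat[OF bigK_carrier[OF Kt] p _ i j, of ?y]
      index_vstar_smult_unit_vec[OF bigK_carrier[OF Kt], of 0 j y1]
    by (subst index_add_mat(1)) auto
  show "(blockY Kt a b e Yt + Lmat (bigK Kt) ?p ?y) $$ (i,j) = blockY Kt (a - y1 * d) b (e + y1 \<cdot>\<^sub>v x) Yt $$ (i,j)"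
    unfolding entry vstar_bigK_stack_vec[OF Kt x]
    by (rule less_add2_cases[OF i]; rule less_add2_cases[OF j])
      (use x e xs in \<open>auto simp: index_blockY[OF Kt] index_bigK[OF Kt] index_stack_vec
         vstar_add_smult[OF Kt e x] algebra_simps\<close>)
qed (use Kt in auto)

lemma blockY_add_Lmat_en:
  assumes Kt: "Kt \<in> carrier_mat n n" and x: "x \<in> carrier_vec n" and b: "b \<in> carrier_vec n"
  shows "blockY Kt a b e Yt + Lmat (bigK Kt) (stack_vec c x d) (unit_vec (n+2) (n+1))
    = blockY Kt (a + c) (b + x) e Yt"
proof (rule eq_matI)
  let ?v = "stack_vec c x d" and ?en = "unit_vec (n+2) (n+1)"
  have v: "?v \<in> carrier_vec (n+2)" by (rule stack_vec_carrier[OF x])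
  have xs: "vstar Kt x \<in> carrier_vec n" by (rule vstar_carrier[OF Kt x])
  fix i j assume "i < dim_row (blockY Kt (a + c) (b + x) e Yt)" "j < dim_col (blockY Kt (a + c) (b + x) e Yt)"
  then have i: "i < n+2" and j: "j < n+2" using Kt by auto
  have entry: "(blockY Kt a b e Yt + Lmat (bigK Kt) ?v ?en) $$ (i,j)
      = blockY Kt a b e Yt $$ (i,j) + (?v $ i * bigK Kt $$ (Suc n,j) - ?en $ i * vstar (bigK Kt) ?v $ j)"
    using Kt i j index_Lmat[OF bigK_carrier[OF Kt] v _ i j, of ?en]
      index_vstar_smult_unit_vec[OF bigK_carrier[OF Kt], of "n+1" j 1]
    by (subst index_add_mat(1)) auto
  show "(blockY Kt a b e Yt + Lmat (bigK Kt) ?v ?en) $$ (i,j) = blockY Kt (a + c) (b + x) e Yt $$ (i,j)"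
    unfolding entry vstar_bigK_stack_vec[OF Kt x]
    by (rule less_add2_cases[OF i]; rule less_add2_cases[OF j])
      (use x b xs in \<open>auto simp: index_blockY[OF Kt] index_bigK[OF Kt] index_stack_vec
         vstar_add_smult[OF Kt b x, of 1, simplified]\<close>)
qed (use Kt in auto)

lemma transpose_mult_vstar_orth_group:
  assumes Kt: "Kt \<in> carrier_mat n n" "transpose_mat Kt = Kt" and Pt: "Pt \<in> orth_group Kt"
    and x: "x \<in> carrier_vec n"
  shows "transpose_mat Pt *\<^sub>v vstar Kt (Pt *\<^sub>v x) = vstar Kt x"
proof -
  have P: "Pt \<in> carrier_mat n n" and orth: "transpose_mat Pt * Kt * Pt = Kt"
    using Pt Kt by (auto simp: orth_group_def)
  have "transpose_mat Pt *\<^sub>v vstar Kt (Pt *\<^sub>v x) = (transpose_mat Pt * Kt * Pt) *\<^sub>v x"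
    unfolding vstar_def Kt(2) using Kt P x by (simp add: assoc_mult_mat_vec[of _ n n _ n])
  then show ?thesis using orth Kt by (simp add: vstar_def)
qed

lemma blockY_mult_diag_embed:
  assumes Kt: "Kt \<in> carrier_mat n n" "transpose_mat Kt = Kt" and Pt: "Pt \<in> orth_group Kt"
    and Yt: "Yt \<in> carrier_mat n n" "Yt' \<in> carrier_mat n n" and comm: "Yt' * Pt = Pt * Yt"
    and b: "b \<in> carrier_vec n" and e: "e \<in> carrier_vec n"
  shows "blockY Kt a (Pt *\<^sub>v b) (Pt *\<^sub>v e) Yt' * diag_embed n Pt = diag_embed n Pt * blockY Kt a b e Yt"
proof (rule eq_matI)
  have P: "Pt \<in> carrier_mat n n" using Pt Kt by (simp add: orth_group_def)
  fix i j assume "i < dim_row (diag_embed n Pt * blockY Kt a b e Yt)" "j < dim_col (diag_embed n Pt * blockY Kt a b e Yt)"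
  then have i: "i < n+2" and j: "j < n+2" using Kt by auto
  have Pv: "(Pt *\<^sub>v x) $ m = (\<Sum>k<n. Pt $$ (m,k) * x $ k)" if "x \<in> carrier_vec n" "m < n" for x m
    by (rule index_mult_mat_vec_sum[OF P that])
  have YP: "(\<Sum>k<n. Yt' $$ (m,k) * Pt $$ (k,l)) = (\<Sum>k<n. Pt $$ (m,k) * Yt $$ (k,l))" if "m < n" "l < n" for m l
    using index_mult_mat_sum[OF Yt(2) P that] index_mult_mat_sum[OF P Yt(1) that] comm by simp
  have vP: "(\<Sum>k<n. - (vstar Kt (Pt *\<^sub>v x) $ k * Pt $$ (k,l))) = - vstar Kt x $ l"
    if "x \<in> carrier_vec n" "l < n" for x l
  proof -
    have "(\<Sum>k<n. vstar Kt (Pt *\<^sub>v x) $ k * Pt $$ (k,l)) = (transpose_mat Pt *\<^sub>v vstar Kt (Pt *\<^sub>v x)) $ l"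
      using P Kt that
      by (subst index_mult_mat_vec_sum[of _ n n]) (auto simp: vstar_carrier mult.commute intro!: sum.cong)
    then show ?thesis
      using transpose_mult_vstar_orth_group[OF Kt Pt that(1)] by (simp add: sum_negf)
  qed
  show "(blockY Kt a (Pt *\<^sub>v b) (Pt *\<^sub>v e) Yt' * diag_embed n Pt) $$ (i,j) = (diag_embed n Pt * blockY Kt a b e Yt) $$ (i,j)"
    unfolding index_mult_mat_sum[OF blockY_carrier[OF Kt(1)] diag_embed_carrier i j]
      index_mult_mat_sum[OF diag_embed_carrier blockY_carrier[OF Kt(1)] i j] sum_lessThan_add2_split
    by (rule less_add2_cases[OF i]; rule less_add2_cases[OF j])
      (use b e in \<open>auto simp: index_diag_embed index_blockY[OF Kt(1)] Pv YP vP
         simp del: index_mult_mat_vec cong: sum.cong_simp\<close>)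
qed (use Kt in auto)

lemma orth_group_stabilizer_eq_diag_embed:
  assumes Kt: "Kt \<in> carrier_mat n n" and P: "P \<in> orth_group (bigK Kt)"
    and fix_en: "P *\<^sub>v unit_vec (n+2) (n+1) = unit_vec (n+2) (n+1)"
    and y1: "y1 \<noteq> 0"
    and fix_y: "y1 \<cdot>\<^sub>v unit_vec (n+2) 0 = P *\<^sub>v (y1 \<cdot>\<^sub>v unit_vec (n+2) 0) + v0 \<cdot>\<^sub>v unit_vec (n+2) (n+1)"
  shows "P = diag_embed n (mid_block n P)"
proof -
  have PC: "P \<in> carrier_mat (n+2) (n+2)" and orth: "transpose_mat P * bigK Kt * P = bigK Kt"
    using P Kt by (auto simp: orth_group_def)
  have form_eq: "P $$ (0,i) * P $$ (Suc n,j) + P $$ (Suc n,i) * P $$ (0,j)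
      + (\<Sum>k<n. \<Sum>l<n. P $$ (Suc k,i) * Kt $$ (k,l) * P $$ (Suc l,j)) = bigK Kt $$ (i,j)"
    if "i < n+2" "j < n+2" for i j
    using index_transpose_mult_bigK_mult[OF Kt PC that] orth by simp
  have col_last: "P $$ (i,Suc n) = (if i = Suc n then 1 else 0)" if "i < n+2" for i
    using arg_cong[OF fix_en, of "\<lambda>v. v $ i"] that PC by simp
  have col0_eq: "y1 * P $$ (i,0) + v0 * (if i = Suc n then 1 else 0) = (if i = 0 then y1 else 0)"
    if "i < n+2" for i
    using arg_cong[OF fix_y, of "\<lambda>v. v $ i"] that PC by (simp add: mult_mat_vec[OF PC]) (auto split: if_splits)
  \<comment> \<open>v0 absorbs P(n+1,0); that entry is forced to 0 by orthogonality below\<close>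
  have col0: "P $$ (i,0) = (if i = 0 then 1 else 0)" if "i < n+1" for i
    using col0_eq[of i] that y1 by (auto split: if_splits)
  have P_n0: "P $$ (Suc n,0) = 0"
    using form_eq[of 0 0] col0 by (simp add: index_bigK[OF Kt])
  have row0: "P $$ (0,Suc k) = 0" if "k < n" for k
    using form_eq[of "Suc k" "Suc n"] that col_last col0 by (simp add: index_bigK[OF Kt])
  have row_last: "P $$ (Suc n,Suc k) = 0" if "k < n" for k
    using form_eq[of "Suc k" 0] that col0 P_n0 by (simp add: index_bigK[OF Kt])
  show ?thesis
    by (rule diag_embed_mid_block[OF PC, symmetric]) (use col0 col_last P_n0 row0 row_last in auto)
qed

lemma orth_group_left_inverse:
  assumes Kt: "Kt \<in> carrier_mat n n" "Kt * Kt = 1\<^sub>m n" and P: "P \<in> orth_group Kt"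
  shows "Kt * transpose_mat P * Kt * P = 1\<^sub>m n"
proof -
  have PC: "P \<in> carrier_mat n n" and orth: "transpose_mat P * Kt * P = Kt"
    using P Kt by (auto simp: orth_group_def)
  have "Kt * transpose_mat P * Kt * P = Kt * (transpose_mat P * Kt * P)"
    using Kt PC by (simp add: assoc_mult_mat[of _ n n _ n _ n])
  then show ?thesis using orth Kt by simp
qed

lemma similar_mat_wit_iff_mult_commute:
  fixes A B P Q :: "'a :: field mat"
  assumes carrier: "A \<in> carrier_mat n n" "B \<in> carrier_mat n n" "P \<in> carrier_mat n n" "Q \<in> carrier_mat n n"
    and QP: "Q * P = 1\<^sub>m n"
  shows "similar_mat_wit A B P Q \<longleftrightarrow> A * P = P * B"
proof -
  have PQ: "P * Q = 1\<^sub>m n" by (rule mat_mult_left_right_inverse[OF carrier(4,3) QP])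
  have "A = P * B * Q \<longleftrightarrow> A * P = P * B"
  proof
    assume "A = P * B * Q"
    then have "A * P = P * B * (Q * P)" using carrier by (simp add: assoc_mult_mat[of _ n n _ n _ n])
    then show "A * P = P * B" using QP carrier by simp
  next
    assume "A * P = P * B"
    then have "A * P * Q = P * B * Q" by simp
    then show "A = P * B * Q" using PQ carrier by (simp add: assoc_mult_mat[of _ n n _ n _ n])
  qed
  then show ?thesis using carrier PQ QP by (simp add: similar_mat_wit_def)
qed

lemma orth_group_similar_mat_wit_iff:
  assumes Kt: "Kt \<in> carrier_mat n n" "Kt * Kt = 1\<^sub>m n" and P: "P \<in> orth_group Kt"
    and A: "A \<in> carrier_mat n n" and B: "B \<in> carrier_mat n n"
  shows "(\<exists>Q. similar_mat_wit A B P Q) \<longleftrightarrow> A * P = P * B"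
proof
  have PC: "P \<in> carrier_mat n n" using P Kt by (simp add: orth_group_def)
  show "A * P = P * B" if sim_ex: "\<exists>Q. similar_mat_wit A B P Q"
  proof -
    obtain Q where sim: "similar_mat_wit A B P Q" using sim_ex by blast
    then have "Q \<in> carrier_mat n n" "Q * P = 1\<^sub>m n"
      using A by (auto simp: similar_mat_wit_def)
    then show ?thesis using sim similar_mat_wit_iff_mult_commute[OF A B PC] by blast
  qed
  show "\<exists>Q. similar_mat_wit A B P Q" if "A * P = P * B"
  proof
    show "similar_mat_wit A B P (Kt * transpose_mat P * Kt)"
      using that similar_mat_wit_iff_mult_commute[OF A B PC _ orth_group_left_inverse[OF Kt P]] PC Kt
      by simp
  qed
qed

lemma equiv_tuple_blockY_imp_commute:
  assumes Kt: "Kt \<in> carrier_mat n n" and y1: "y1 \<noteq> 0"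
    and e: "e \<in> carrier_vec n" and b': "b' \<in> carrier_vec n"
    and Yt: "Yt \<in> carrier_mat n n" and Yt': "Yt' \<in> carrier_mat n n"
    and eqv: "equiv_tuple Kt (blockY Kt a b e Yt) (y1 \<cdot>\<^sub>v unit_vec (n+2) 0)
                             (blockY Kt a' b' e' Yt') (y1 \<cdot>\<^sub>v unit_vec (n+2) 0)"
  shows "\<exists>Pt \<in> orth_group Kt. Yt' * Pt = Pt * Yt"
proof -
  let ?K = "bigK Kt" and ?en = "unit_vec (n+2) (n+1)" and ?y = "y1 \<cdot>\<^sub>v unit_vec (n+2) 0"
  obtain P v p v0 Q where P: "P \<in> orth_group ?K" and fix_en: "P *\<^sub>v ?en = ?en"
    and v: "v \<in> carrier_vec (n+2)" and p: "p \<in> carrier_vec (n+2)"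
    and p_en: "(xstar ?K p * cvec ?en) $$ (0,0) = 0"
    and Q: "Q \<in> carrier_mat (n+2) (n+2)" and QP: "Q * P = 1\<^sub>m (n+2)"
    and conj: "blockY Kt a' b' e' Yt' + Lmat ?K v ?en = P * (blockY Kt a b e Yt + Lmat ?K p ?y) * Q"
    and fix_y: "?y = P *\<^sub>v ?y + v0 \<cdot>\<^sub>v ?en"
    using eqv Kt unfolding equiv_tuple_def Let_def by auto
  define Pt where "Pt = mid_block n P"
  have PC: "P \<in> carrier_mat (n+2) (n+2)" using P Kt by (simp add: orth_group_def)
  have PtC: "Pt \<in> carrier_mat n n" unfolding Pt_def by (rule mid_block_carrier)
  have P_eq: "P = diag_embed n Pt"
    unfolding Pt_def by (rule orth_group_stabilizer_eq_diag_embed[OF Kt P fix_en y1 fix_y])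
  have Pt: "Pt \<in> orth_group Kt"
    using P unfolding P_eq by (simp add: diag_embed_in_orth_group_iff[OF Kt PtC])
  define x where "x = vec n (\<lambda>k. p $ Suc k)"
  define x' where "x' = vec n (\<lambda>k. v $ Suc k)"
  have x: "x \<in> carrier_vec n" and x': "x' \<in> carrier_vec n" by (simp_all add: x_def x'_def)
  have p_eq: "p = stack_vec (p $ 0) x (p $ Suc n)" and v_eq: "v = stack_vec (v $ 0) x' (v $ Suc n)"
    unfolding x_def x'_def by (rule stack_vec_components[OF p, symmetric], rule stack_vec_components[OF v, symmetric])
  have "p $ 0 = 0" using p_en xstar_bigK_mult_cvec_unit_vec_last[OF Kt p] by simp
  then have M: "blockY Kt a b e Yt + Lmat ?K p ?y = blockY Kt (a - y1 * p $ Suc n) b (e + y1 \<cdot>\<^sub>v x) Yt"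
    using blockY_add_Lmat_e1[OF Kt x e] p_eq by metis
  have M': "blockY Kt a' b' e' Yt' + Lmat ?K v ?en = blockY Kt (a' + v $ 0) (b' + x') e' Yt'"
    using blockY_add_Lmat_en[OF Kt x' b'] v_eq by metis
  let ?M = "blockY Kt (a - y1 * p $ Suc n) b (e + y1 \<cdot>\<^sub>v x) Yt"
    and ?M' = "blockY Kt (a' + v $ 0) (b' + x') e' Yt'"
  have MC: "?M \<in> carrier_mat (n+2) (n+2)" by (rule blockY_carrier[OF Kt])
  have "?M' * P = P * ?M * Q * P" using conj unfolding M M' by simp
  also have "\<dots> = P * ?M * (Q * P)"
    by (rule assoc_mult_mat[of _ "n+2" "n+2" _ "n+2" _ "n+2"]) (use PC MC Q in auto)
  also have "\<dots> = P * ?M" using QP right_mult_one_mat[OF mult_carrier_mat[OF PC MC]] by simp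
  finally have "?M' * diag_embed n Pt = diag_embed n Pt * ?M" unfolding P_eq .
  then have "mid_block n (?M' * diag_embed n Pt) = mid_block n (diag_embed n Pt * ?M)" by simp
  then have "Yt' * Pt = Pt * Yt"
    unfolding mid_block_mult_diag_embed[OF PtC blockY_carrier[OF Kt]]
      mid_block_diag_embed_mult[OF PtC blockY_carrier[OF Kt]] mid_block_blockY[OF Kt Yt] mid_block_blockY[OF Kt Yt'] .
  then show ?thesis using Pt by blast
qed

lemma commute_imp_equiv_tuple_blockY:
  assumes Kt: "Kt \<in> carrier_mat n n" "transpose_mat Kt = Kt" "Kt * Kt = 1\<^sub>m n" and y1: "y1 \<noteq> 0"
    and vecs: "b \<in> carrier_vec n" "e \<in> carrier_vec n" "b' \<in> carrier_vec n" "e' \<in> carrier_vec n"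
    and Yt: "Yt \<in> carrier_mat n n" and Yt': "Yt' \<in> carrier_mat n n"
    and Pt: "Pt \<in> orth_group Kt" and comm: "Yt' * Pt = Pt * Yt"
  shows "equiv_tuple Kt (blockY Kt a b e Yt) (y1 \<cdot>\<^sub>v unit_vec (n+2) 0)
                        (blockY Kt a' b' e' Yt') (y1 \<cdot>\<^sub>v unit_vec (n+2) 0)"
proof -
  let ?K = "bigK Kt" and ?en = "unit_vec (n+2) (n+1)" and ?y = "y1 \<cdot>\<^sub>v unit_vec (n+2) 0"
  have PtC: "Pt \<in> carrier_mat n n" using Pt Kt by (simp add: orth_group_def)
  define Qt where "Qt = Kt * transpose_mat Pt * Kt"
  have QtPt: "Qt * Pt = 1\<^sub>m n" unfolding Qt_def by (rule orth_group_left_inverse[OF Kt(1,3) Pt])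
  have Qt: "Qt \<in> carrier_mat n n" "Pt * Qt = 1\<^sub>m n" "Qt * Pt = 1\<^sub>m n"
    using mat_mult_left_right_inverse[of Qt n Pt] QtPt PtC Kt by (auto simp: Qt_def)
  let ?P = "diag_embed n Pt" and ?Q = "diag_embed n Qt"
  define e0 where "e0 = Qt *\<^sub>v e'"
  have e0: "e0 \<in> carrier_vec n" unfolding e0_def using Qt vecs by simp
  have Pt_e0: "Pt *\<^sub>v e0 = e'"
    unfolding e0_def using PtC Qt vecs by (simp add: assoc_mult_mat_vec[symmetric, of _ n n _ n])
  \<comment> \<open>p moves e~ to e0 = P~^-1 e~', and v moves (a', b~') to (a, P~ b~)\<close>
  define x where "x = (1 / y1) \<cdot>\<^sub>v (e0 - e)"
  define x' where "x' = Pt *\<^sub>v b - b'"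
  have x: "x \<in> carrier_vec n" and x': "x' \<in> carrier_vec n"
    unfolding x_def x'_def using e0 vecs PtC by auto
  define p where "p = stack_vec 0 x 0"
  define v where "v = stack_vec (a - a') x' 0"
  have p: "p \<in> carrier_vec (n+2)" and v: "v \<in> carrier_vec (n+2)"
    unfolding p_def v_def by (rule stack_vec_carrier[OF x], rule stack_vec_carrier[OF x'])
  have "e + y1 \<cdot>\<^sub>v x = e0" and "b' + x' = Pt *\<^sub>v b"
    unfolding x_def x'_def by (rule eq_vecI; use e0 vecs PtC y1 in auto)+
  then have M: "blockY Kt a b e Yt + Lmat ?K p ?y = blockY Kt a b e0 Yt"
    and M': "blockY Kt a' b' e' Yt' + Lmat ?K v ?en = blockY Kt a (Pt *\<^sub>v b) e' Yt'"
    unfolding p_def v_def blockY_add_Lmat_e1[OF Kt(1) x vecs(2)] blockY_add_Lmat_en[OF Kt(1) x' vecs(3)]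
    by simp_all
  have conj_P: "blockY Kt a (Pt *\<^sub>v b) e' Yt' * ?P = ?P * blockY Kt a b e0 Yt"
    using blockY_mult_diag_embed[OF Kt(1,2) Pt Yt Yt' comm vecs(1) e0] unfolding Pt_e0 .
  have PQ: "?P * ?Q = 1\<^sub>m (n+2)" and QP: "?Q * ?P = 1\<^sub>m (n+2)"
    using diag_embed_mult[OF PtC Qt(1)] diag_embed_mult[OF Qt(1) PtC] Qt diag_embed_one by simp_all
  have conj: "blockY Kt a' b' e' Yt' + Lmat ?K v ?en = ?P * (blockY Kt a b e Yt + Lmat ?K p ?y) * ?Q"
  proof -
    have "blockY Kt a' b' e' Yt' + Lmat ?K v ?en = blockY Kt a (Pt *\<^sub>v b) e' Yt' * (?P * ?Q)"
      unfolding M' PQ using right_mult_one_mat[OF blockY_carrier[OF Kt(1)]] by simp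
    also have "\<dots> = blockY Kt a (Pt *\<^sub>v b) e' Yt' * ?P * ?Q"
      by (rule assoc_mult_mat[symmetric, of _ "n+2" "n+2" _ "n+2" _ "n+2"])
        (use blockY_carrier[OF Kt(1)] diag_embed_carrier in auto)
    finally show ?thesis unfolding conj_P M .
  qed
  have P_orth: "?P \<in> orth_group ?K"
    using Pt by (simp add: diag_embed_in_orth_group_iff[OF Kt(1) PtC])
  have p_en: "(xstar ?K p * cvec ?en) $$ (0,0) = 0"
    using xstar_bigK_mult_cvec_unit_vec_last[OF Kt(1) p] by (simp add: p_def index_stack_vec[OF x])
  have "?P *\<^sub>v ?y = ?y"
    unfolding mult_mat_vec[OF diag_embed_carrier unit_vec_carrier] diag_embed_mult_unit_vec(1) ..
  then have fix_y: "?y = ?P *\<^sub>v ?y + 0 \<cdot>\<^sub>v ?en"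
    by (intro eq_vecI) simp_all
  show ?thesis
    unfolding equiv_tuple_def Let_def carrier_matD(1)[OF Kt(1)]
    using P_orth diag_embed_mult_unit_vec(2) v p p_en diag_embed_carrier PQ QP conj fix_y by blast
qed

theorem proposition6:
  fixes Kt :: "real mat" and n :: nat
    and a a' y1 :: real and b e b' e' :: "real vec" and Yt Yt' :: "real mat"
  assumes Kt: "Kt \<in> carrier_mat n n" "transpose_mat Kt = Kt" "Kt * Kt = 1\<^sub>m n"
    and y1: "y1 \<noteq> 0"
    and vecs: "b \<in> carrier_vec n" "e \<in> carrier_vec n" "b' \<in> carrier_vec n" "e' \<in> carrier_vec n"
    and Yt: "Yt \<in> orth_alg Kt" and Yt': "Yt' \<in> orth_alg Kt"
  shows "equiv_tuple Kt (blockY Kt a b e Yt) (y1 \<cdot>\<^sub>v unit_vec (n+2) 0)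
                        (blockY Kt a' b' e' Yt') (y1 \<cdot>\<^sub>v unit_vec (n+2) 0)
         \<longleftrightarrow> (\<exists>Pt \<in> orth_group Kt. \<exists>Qt. similar_mat_wit Yt' Yt Pt Qt)"
proof -
  have YtC: "Yt \<in> carrier_mat n n" "Yt' \<in> carrier_mat n n"
    using Yt Yt' Kt by (auto simp: orth_alg_def)
  have "equiv_tuple Kt (blockY Kt a b e Yt) (y1 \<cdot>\<^sub>v unit_vec (n+2) 0)
                      (blockY Kt a' b' e' Yt') (y1 \<cdot>\<^sub>v unit_vec (n+2) 0)
        \<longleftrightarrow> (\<exists>Pt \<in> orth_group Kt. Yt' * Pt = Pt * Yt)"
    using equiv_tuple_blockY_imp_commute[OF Kt(1) y1 vecs(2,3) YtC]
      commute_imp_equiv_tuple_blockY[OF Kt y1 vecs YtC] by blast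
  also have "\<dots> \<longleftrightarrow> (\<exists>Pt \<in> orth_group Kt. \<exists>Qt. similar_mat_wit Yt' Yt Pt Qt)"
    using orth_group_similar_mat_wit_iff[OF Kt(1,3) _ YtC(2,1)] by blast
  finally show ?thesis .
qed

end
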